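(* Let $f\in\mathfrak{D}$ have degree $j$ and $A=R/\operatorname{Ann}_R f$. For all integers $a\ge 0$ and $i$ there are $\mathsf{k}$-vector space isomorphisms $$Q_A(a)_i\cong\frac{(\mathfrak{m}^{\,i}\circ f)_{\le j-a-i}}{(\mathfrak{m}^{\,i}\circ f)_{\le j-a-1-i}+(\mathfrak{m}^{\,i+1}\circ f)_{\le j-a-i}},$$ and $$Q_A^\vee(a)_i\cong\frac{(\mathfrak{m}^{\,j-a-i}\circ f)_{\le i}}{(\mathfrak{m}^{\,j-a-i}\circ f)_{\le i-1}+(\mathfrak{m}^{\,j+1-a-i}\circ f)_{\le i}}.$$
   Context: Let $\mathsf{k}$ be a field, $R=\mathsf{k}\{x_1,\ldots,x_r\}$ the formal power series ring with maximal ideal $\mathfrak{m}=\mathfrak{m}_R$, and $\mathfrak{D}=\mathsf{k}_{DP}[X_1,\ldots,X_r]$ the divided power algebra, on which $R$ acts by contraction ($x^{\alpha}\circ X^{[\beta]}=X^{[\beta-\alpha]}$ if $\beta\ge\alpha$ componentwise, $0$ otherwise). For $f\in\mathfrak{D}$ of degree $j$, $A=R/\operatorname{Ann}_R f$ is Artinian Gorenstein of socle degree $j$ with maximal ideal $\mathfrak{m}_A$. Notation: $\mathfrak{m}^{\,s}\circ f=\{\varphi\circ f:\varphi\in\mathfrak{m}^s\}$, and for a subspace $V\subseteq\mathfrak{D}$, $V_{\le t}=V\cap\mathfrak{D}_{\le t}$ (elements of degree at most $t$). The ideal $C_A(a)$ of $A^*=\bigoplus_i\mathfrak{m}_A^i/\mathfrak{m}_A^{i+1}$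 has degree-$i$ part equal to the image in $\mathfrak{m}_A^i/\mathfrak{m}_A^{i+1}$ of $\mathfrak{m}_A^i\cap(0:\mathfrak{m}_A^{\,j+1-a-i})$, and $Q_A(a)=C_A(a)/C_A(a+1)$. The dual $Q_A^\vee(a)$ is graded so that $Q_A^\vee(a)_i=\operatorname{Hom}_{\mathsf{k}}(Q_A(a)_{j-a-i},\mathsf{k})$ (the pairing $Q_A(a)_i\times Q_A(a)_{j-a-i}\to\mathsf{k}$ induced by $(h,h')\mapsto (hh'\circ f)(0)$ is exact). *)

theory Defs
  imports Main "HOL-Library.Function_Algebras"
begin

text \<open>Both formal power series in R = k{x_1..x_r} and divided power polynomials in
  D = k_DP[X_1..X_r] are represented by their coefficient functions on multi-indices
  (x^alpha resp. X^[alpha] has coefficient at alpha).\<close>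

definition midx :: "nat \<Rightarrow> (nat \<Rightarrow> nat) set" where
  "midx r = {\<alpha>. \<forall>i\<ge>r. \<alpha> i = 0}"

definition tdeg :: "nat \<Rightarrow> (nat \<Rightarrow> nat) \<Rightarrow> nat" where
  "tdeg r \<alpha> = (\<Sum>i<r. \<alpha> i)"

definition PS :: "nat \<Rightarrow> ((nat \<Rightarrow> nat) \<Rightarrow> 'k::field) set" where
  "PS r = {\<phi>. \<forall>\<alpha>. \<alpha> \<notin> midx r \<longrightarrow> \<phi> \<alpha> = 0}"

definition DP :: "nat \<Rightarrow> ((nat \<Rightarrow> nat) \<Rightarrow> 'k::field) set" where
  "DP r = {F \<in> PS r. finite {\<beta>. F \<beta> \<noteq> 0}}"

definition ps_mult :: "((nat \<Rightarrow> nat) \<Rightarrow> 'k::field) \<Rightarrow> ((nat \<Rightarrow> nat) \<Rightarrow> 'k) \<Rightarrow> (nat \<Rightarrow> nat) \<Rightarrow> 'k" where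
  "ps_mult \<phi> \<psi> = (\<lambda>\<gamma>. \<Sum>\<alpha>\<in>{\<alpha>. \<alpha> \<le> \<gamma>}. \<phi> \<alpha> * \<psi> (\<gamma> - \<alpha>))"

text \<open>Contraction action of R on D: x^alpha o X^[beta] = X^[beta - alpha] if alpha \<le> beta, else 0,
  extended linearly (the sum is finite as F has finite support).\<close>
definition contr :: "((nat \<Rightarrow> nat) \<Rightarrow> 'k::field) \<Rightarrow> ((nat \<Rightarrow> nat) \<Rightarrow> 'k) \<Rightarrow> (nat \<Rightarrow> nat) \<Rightarrow> 'k" where
  "contr \<phi> F = (\<lambda>\<gamma>. \<Sum>\<beta>\<in>{\<beta>. F \<beta> \<noteq> 0}. if \<gamma> \<le> \<beta> then \<phi> (\<beta> - \<gamma>) * F \<beta> else 0)"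

definition dp_deg :: "nat \<Rightarrow> ((nat \<Rightarrow> nat) \<Rightarrow> 'k::field) \<Rightarrow> nat" where
  "dp_deg r F = Max (tdeg r ` {\<beta>. F \<beta> \<noteq> 0})"

text \<open>The power m^s of the maximal ideal of R (for s \<le> 0 this is R itself).\<close>
definition mpow :: "nat \<Rightarrow> int \<Rightarrow> ((nat \<Rightarrow> nat) \<Rightarrow> 'k::field) set" where
  "mpow r s = {\<phi> \<in> PS r. \<forall>\<alpha>. int (tdeg r \<alpha>) < s \<longrightarrow> \<phi> \<alpha> = 0}"

definition Ann :: "nat \<Rightarrow> ((nat \<Rightarrow> nat) \<Rightarrow> 'k::field) \<Rightarrow> ((nat \<Rightarrow> nat) \<Rightarrow> 'k) set" where
  "Ann r f = {\<phi> \<in> PS r. contr \<phi> f = 0}"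

definition act :: "((nat \<Rightarrow> nat) \<Rightarrow> 'k::field) set \<Rightarrow> ((nat \<Rightarrow> nat) \<Rightarrow> 'k) \<Rightarrow> ((nat \<Rightarrow> nat) \<Rightarrow> 'k) set" where
  "act S f = (\<lambda>\<phi>. contr \<phi> f) ` S"

definition le_deg :: "nat \<Rightarrow> ((nat \<Rightarrow> nat) \<Rightarrow> 'k::field) set \<Rightarrow> int \<Rightarrow> ((nat \<Rightarrow> nat) \<Rightarrow> 'k) set" where
  "le_deg r V t = {F \<in> V. \<forall>\<beta>. F \<beta> \<noteq> 0 \<longrightarrow> int (tdeg r \<beta>) \<le> t}"

definition ssum :: "'a::plus set \<Rightarrow> 'a set \<Rightarrow> 'a set" where
  "ssum U W = {u + w | u w. u \<in> U \<and> w \<in> W}"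

text \<open>Preimage in R of m_A^i (A = R / Ann f).\<close>
definition mA_pre :: "nat \<Rightarrow> ((nat \<Rightarrow> nat) \<Rightarrow> 'k::field) \<Rightarrow> int \<Rightarrow> ((nat \<Rightarrow> nat) \<Rightarrow> 'k) set" where
  "mA_pre r f i = ssum (mpow r i) (Ann r f)"

text \<open>The class of phi lies in (0 : m_A^k).\<close>
definition ann_pow :: "nat \<Rightarrow> ((nat \<Rightarrow> nat) \<Rightarrow> 'k::field) \<Rightarrow> ((nat \<Rightarrow> nat) \<Rightarrow> 'k) \<Rightarrow> int \<Rightarrow> bool" where
  "ann_pow r f \<phi> k = (\<forall>\<psi>\<in>mpow r k. ps_mult \<phi> \<psi> \<in> Ann r f)"

text \<open>Preimage in R of C_A(a)_i \<subseteq> m_A^i/m_A^{i+1}, i.e. of the image of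
  m_A^i \<inter> (0 : m_A^{j+1-a-i}); for i < 0 this is all of R (A^*_i = 0).\<close>
definition C_pre :: "nat \<Rightarrow> ((nat \<Rightarrow> nat) \<Rightarrow> 'k::field) \<Rightarrow> int \<Rightarrow> int \<Rightarrow> int \<Rightarrow> ((nat \<Rightarrow> nat) \<Rightarrow> 'k) set" where
  "C_pre r f j a i =
     ssum {\<phi> \<in> mA_pre r f i. ann_pow r f \<phi> (j + 1 - a - i)} (mA_pre r f (i + 1))"

definition sc :: "'k::field \<Rightarrow> ('a \<Rightarrow> 'k) \<Rightarrow> 'a \<Rightarrow> 'k" where
  "sc c x = (\<lambda>t. c * x t)"

definition lin_on :: "('a \<Rightarrow> 'k::field) set \<Rightarrow> (('a \<Rightarrow> 'k) \<Rightarrow> ('b \<Rightarrow> 'k)) \<Rightarrow> bool" where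
  "lin_on V g \<longleftrightarrow> (\<forall>x\<in>V. \<forall>y\<in>V. g (x + y) = g x + g y) \<and> (\<forall>c. \<forall>x\<in>V. g (sc c x) = sc c (g x))"

text \<open>Linear functionals on V (zero outside V, to make them unique).\<close>
definition functional_on :: "('a \<Rightarrow> 'k::field) set \<Rightarrow> (('a \<Rightarrow> 'k) \<Rightarrow> 'k) \<Rightarrow> bool" where
  "functional_on V l \<longleftrightarrow> (\<forall>x\<in>V. \<forall>y\<in>V. l (x + y) = l x + l y) \<and> (\<forall>c. \<forall>x\<in>V. l (sc c x) = c * l x)
      \<and> (\<forall>x. x \<notin> V \<longrightarrow> l x = 0)"

text \<open>Hom_k(V/U, k), realized as the functionals on V vanishing on U.\<close>
definition dual_quot :: "('a \<Rightarrow> 'k::field) set \<Rightarrow> ('a \<Rightarrow> 'k) set \<Rightarrow> (('a \<Rightarrow> 'k) \<Rightarrow> 'k) set" where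
  "dual_quot V U = {l. functional_on V l \<and> (\<forall>u\<in>U. l u = 0)}"

text \<open>V/U and V'/U' are isomorphic k-vector spaces: there is a linear map V \<rightarrow> V'
  inducing a bijection V/U \<rightarrow> V'/U'.\<close>
definition quot_iso :: "('a \<Rightarrow> 'k::field) set \<Rightarrow> ('a \<Rightarrow> 'k) set \<Rightarrow> ('b \<Rightarrow> 'k) set \<Rightarrow> ('b \<Rightarrow> 'k) set \<Rightarrow> bool" where
  "quot_iso V U V' U' \<longleftrightarrow> U \<subseteq> V \<and> U' \<subseteq> V' \<and>
     (\<exists>g. lin_on V g \<and> g ` V \<subseteq> V' \<and> (\<forall>y\<in>V'. \<exists>x\<in>V. y - g x \<in> U') \<and>
          (\<forall>x\<in>V. g x \<in> U' \<longleftrightarrow> x \<in> U))"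

end

theory Submission
  imports Defs "HOL.Vector_Spaces"
begin

text \<open>The contraction \<phi> \<mapsto> \<phi> o f identifies A = R/Ann f with R o f, and the class of \<phi> is
  annihilated by m_A^k exactly when \<phi> o f has degree below k (contract \<phi> o f with a monomial of top
  degree and evaluate at 0). Hence the lifts of C_A(a)_i that lie in m^i + Ann f and are killed by
  m_A^(j+1-a-i) are mapped onto (m^i o f) of degree at most j-a-i, and such a lift represents an
  element of C_A(a+1)_i exactly when its image splits into a part of lower degree and a part in
  m^(i+1) o f. The second one is the first one at index j-a-i,
  composed with the duality V/U \<cong> Hom(V/U, k) of finite dimensional quotients; finiteness holds
  because everything in R o f is supported below the finite support of f.\<close>

section \<open>Quotients of spaces of functions into a field\<close>

interpretation vs: vector_space "sc :: 'k::field \<Rightarrow> ('a \<Rightarrow> 'k) \<Rightarrow> 'a \<Rightarrow> 'k"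
  by unfold_locales (auto simp: sc_def fun_eq_iff algebra_simps)

interpretation vsp: vector_space_pair "sc :: 'k::field \<Rightarrow> ('a \<Rightarrow> 'k) \<Rightarrow> 'a \<Rightarrow> 'k" "sc :: 'k \<Rightarrow> ('b \<Rightarrow> 'k) \<Rightarrow> 'b \<Rightarrow> 'k"
  by unfold_locales

lemma sc_apply: "sc c y x = c * y x"
  by (simp add: sc_def)

lemma sum_fun_apply: "(\<Sum>a\<in>A. f a) x = (\<Sum>a\<in>A. f a x)"
  by (induction A rule: infinite_finite_induct) auto

lemma ssumI: "u \<in> U \<Longrightarrow> w \<in> W \<Longrightarrow> u + w \<in> ssum U W"
  by (auto simp: ssum_def)

lemma ssumE: "x \<in> ssum U W \<Longrightarrow> (\<And>u w. x = u + w \<Longrightarrow> u \<in> U \<Longrightarrow> w \<in> W \<Longrightarrow> P) \<Longrightarrow> P"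
  by (auto simp: ssum_def)

lemma subspace_ssum: "vs.subspace U \<Longrightarrow> vs.subspace W \<Longrightarrow> vs.subspace (ssum U W)"
  unfolding ssum_def by (rule vs.subspace_sums)

lemma linear_imp_lin_on: "Vector_Spaces.linear sc sc g \<Longrightarrow> lin_on V g"
  unfolding lin_on_def using vsp.linear_add vsp.linear_scale by blast

lemma linear_representatives_in_subspace:
  fixes V U W :: "('a \<Rightarrow> 'k::field) set"
  assumes "vs.subspace U" "vs.subspace W" and W_gen: "\<forall>v\<in>V. \<exists>w\<in>W. v - w \<in> U"
  obtains q where "Vector_Spaces.linear sc sc q" "\<And>v. v \<in> V \<Longrightarrow> q v \<in> W" "\<And>v. v \<in> V \<Longrightarrow> v - q v \<in> U"
proof -
  obtain B :: "('a \<Rightarrow> 'k) set" where "B \<subseteq> V" "vs.independent B" "V \<subseteq> vs.span B"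
    by (rule vs.basis_exists)
  define wb where "wb b = (SOME w. w \<in> W \<and> b - w \<in> U)" for b
  have wb: "wb b \<in> W \<and> b - wb b \<in> U" if "b \<in> B" for b
  proof -
    have "\<exists>w. w \<in> W \<and> b - w \<in> U" using W_gen that \<open>B \<subseteq> V\<close> by blast
    then show ?thesis unfolding wb_def by (rule someI_ex)
  qed
  define q where "q = vsp.construct B wb"
  have q: "Vector_Spaces.linear sc sc q"
    unfolding q_def by (rule vsp.linear_construct) fact
  have q_B: "q b = wb b" if "b \<in> B" for b
    unfolding q_def using \<open>vs.independent B\<close> that by (rule vsp.construct_basis)
  have "q ` vs.span B = vs.span (q ` B)"
    by (rule vsp.linear_span_image[OF q, symmetric])
  also have "\<dots> \<subseteq> W"
    using wb q_B \<open>vs.subspace W\<close> by (intro vs.span_minimal) auto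
  finally have q_W: "q v \<in> W" if "v \<in> V" for v using that \<open>V \<subseteq> vs.span B\<close> by blast
  have d: "Vector_Spaces.linear sc sc (\<lambda>v. v - q v)"
    by (intro vsp.linear_compose_sub vs.linear_ident q)
  have "(\<lambda>v. v - q v) ` vs.span B = vs.span ((\<lambda>v. v - q v) ` B)"
    by (rule vsp.linear_span_image[OF d, symmetric])
  also have "\<dots> \<subseteq> U"
    using wb q_B \<open>vs.subspace U\<close> by (intro vs.span_minimal) auto
  finally have q_U: "v - q v \<in> U" if "v \<in> V" for v using that \<open>V \<subseteq> vs.span B\<close> by blast
  from q q_W q_U show ?thesis by (rule that)
qed

lemma quot_iso_of_linear_on_generating_subspace:
  fixes V U W :: "('a \<Rightarrow> 'k::field) set" and V' U' :: "('b \<Rightarrow> 'k) set"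
    and p :: "('a \<Rightarrow> 'k) \<Rightarrow> ('b \<Rightarrow> 'k)"
  assumes "vs.subspace U" "vs.subspace W" "vs.subspace U'"
    and "U \<subseteq> V" "W \<subseteq> V" "U' \<subseteq> V'"
    and p: "Vector_Spaces.linear sc sc p" and pW: "p ` W \<subseteq> V'"
    and W_gen: "\<forall>v\<in>V. \<exists>w\<in>W. v - w \<in> U"
    and p_surj: "\<forall>y\<in>V'. \<exists>w\<in>W. y - p w \<in> U'"
    and p_ker: "\<forall>w\<in>W. p w \<in> U' \<longleftrightarrow> w \<in> U"
  shows "quot_iso V U V' U'"
proof -
  obtain q where q: "Vector_Spaces.linear sc sc q"
    and q_W: "\<And>v. v \<in> V \<Longrightarrow> q v \<in> W" and q_U: "\<And>v. v \<in> V \<Longrightarrow> v - q v \<in> U"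
    using linear_representatives_in_subspace[OF \<open>vs.subspace U\<close> \<open>vs.subspace W\<close> W_gen] by blast
  show ?thesis unfolding quot_iso_def
  proof (intro conjI exI[of _ "p \<circ> q"] ballI)
    show "lin_on V (p \<circ> q)" using Vector_Spaces.linear_compose[OF q p] by (rule linear_imp_lin_on)
    show "(p \<circ> q) ` V \<subseteq> V'" using q_W pW by auto
  next
    fix y assume "y \<in> V'"
    then obtain w where w: "w \<in> W" "y - p w \<in> U'" using p_surj by blast
    have "w \<in> V" using w(1) \<open>W \<subseteq> V\<close> by blast
    have "w - q w \<in> W" using vs.subspace_diff[OF \<open>vs.subspace W\<close> w(1) q_W[OF \<open>w \<in> V\<close>]] .
    then have "p (w - q w) \<in> U'" using p_ker q_U[OF \<open>w \<in> V\<close>] by blast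
    then have "(y - p w) + p (w - q w) \<in> U'" using vs.subspace_add[OF \<open>vs.subspace U'\<close> w(2)] by blast
    also have "(y - p w) + p (w - q w) = y - (p \<circ> q) w" by (simp add: vsp.linear_diff[OF p])
    finally show "\<exists>x\<in>V. y - (p \<circ> q) x \<in> U'" using \<open>w \<in> V\<close> by blast
  next
    fix x assume "x \<in> V"
    have "x \<in> U \<longleftrightarrow> q x \<in> U"
    proof
      assume "x \<in> U"
      from vs.subspace_diff[OF \<open>vs.subspace U\<close> this q_U[OF \<open>x \<in> V\<close>]] show "q x \<in> U" by simp
    next
      assume "q x \<in> U"
      from vs.subspace_add[OF \<open>vs.subspace U\<close> q_U[OF \<open>x \<in> V\<close>] this] show "x \<in> U" by simp
    qed
    then show "(p \<circ> q) x \<in> U' \<longleftrightarrow> x \<in> U" using p_ker q_W[OF \<open>x \<in> V\<close>] by simp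
  qed (fact+)
qed

lemma quot_iso_ssum_of_linear:
  fixes W W' M :: "('a \<Rightarrow> 'k::field) set" and V' U' :: "('b \<Rightarrow> 'k) set"
    and p :: "('a \<Rightarrow> 'k) \<Rightarrow> ('b \<Rightarrow> 'k)"
  assumes "vs.subspace W" "vs.subspace W'" "vs.subspace M" "vs.subspace U'" "W' \<subseteq> W" "U' \<subseteq> V'"
    and "Vector_Spaces.linear sc sc p" "p ` W \<subseteq> V'"
    and "\<forall>y\<in>V'. \<exists>w\<in>W. y - p w \<in> U'"
    and "\<forall>w\<in>W. p w \<in> U' \<longleftrightarrow> w \<in> ssum W' M"
  shows "quot_iso (ssum W M) (ssum W' M) V' U'"
proof (rule quot_iso_of_linear_on_generating_subspace[where W = W])
  have "0 \<in> W'" "0 \<in> M" using assms(2,3) by (simp_all add: vs.subspace_0)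
  show "vs.subspace (ssum W' M)" using assms(2,3) by (rule subspace_ssum)
  show "ssum W' M \<subseteq> ssum W M" using \<open>W' \<subseteq> W\<close> by (auto simp: ssum_def)
  show "W \<subseteq> ssum W M" using ssumI[of _ W 0 M] \<open>0 \<in> M\<close> by force
  show "\<forall>v\<in>ssum W M. \<exists>w\<in>W. v - w \<in> ssum W' M"
  proof
    fix v assume "v \<in> ssum W M"
    then obtain w m where "v = w + m" "w \<in> W" "m \<in> M" by (rule ssumE)
    moreover have "m \<in> ssum W' M" using ssumI[OF \<open>0 \<in> W'\<close> \<open>m \<in> M\<close>] by simp
    ultimately show "\<exists>w\<in>W. v - w \<in> ssum W' M" by force
  qed
qed (use assms in auto)

lemma lin_on_diff:
  assumes "lin_on V h" "vs.subspace V" "x \<in> V" "z \<in> V"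
  shows "h (x - z) = h x - h z"
proof -
  have "h x = h ((x - z) + z)" by simp
  also have "\<dots> = h (x - z) + h z"
    using assms vs.subspace_diff[of V x z] unfolding lin_on_def by blast
  finally show ?thesis by simp
qed

lemma lin_on_sum:
  assumes "lin_on V h" "vs.subspace V" "finite E" "\<forall>e\<in>E. x e \<in> V"
  shows "h (\<Sum>e\<in>E. sc (c e) (x e)) = (\<Sum>e\<in>E. sc (c e) (h (x e)))"
  using assms(3,4)
proof (induction E rule: finite_induct)
  case empty
  have "h (sc 0 0) = sc 0 (h 0)" using assms(1) vs.subspace_0[OF assms(2)] unfolding lin_on_def by blast
  then show ?case by (simp add: sc_def)
next
  case (insert a E)
  have "sc (c a) (x a) \<in> V" "(\<Sum>e\<in>E. sc (c e) (x e)) \<in> V"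
    using insert.prems assms(2) by (auto intro!: vs.subspace_scale vs.subspace_sum)
  then have "h (sc (c a) (x a) + (\<Sum>e\<in>E. sc (c e) (x e)))
      = sc (c a) (h (x a)) + (\<Sum>e\<in>E. sc (c e) (h (x e)))"
    using insert assms(1) unfolding lin_on_def by simp
  then show ?case by (simp only: sum.insert[OF insert.hyps])
qed

lemma functional_on_sum:
  assumes "functional_on V l" "vs.subspace V" "finite E" "\<forall>e\<in>E. x e \<in> V"
  shows "l (\<Sum>e\<in>E. sc (c e) (x e)) = (\<Sum>e\<in>E. c e * l (x e))"
  using assms(3,4)
proof (induction E rule: finite_induct)
  case empty
  have "l (sc 0 0) = 0 * l 0" using assms(1) vs.subspace_0[OF assms(2)] unfolding functional_on_def by blast
  then show ?case by (simp add: sc_def)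
next
  case (insert a E)
  have "sc (c a) (x a) \<in> V" "(\<Sum>e\<in>E. sc (c e) (x e)) \<in> V"
    using insert.prems assms(2) by (auto intro!: vs.subspace_scale vs.subspace_sum)
  then have "l (sc (c a) (x a) + (\<Sum>e\<in>E. sc (c e) (x e))) = c a * l (x a) + (\<Sum>e\<in>E. c e * l (x e))"
    using insert assms(1) unfolding functional_on_def by simp
  then show ?case by (simp only: sum.insert[OF insert.hyps])
qed

section \<open>Bases of quotients and duality\<close>

definition quot_basis :: "('a \<Rightarrow> 'k::field) set \<Rightarrow> ('a \<Rightarrow> 'k) set \<Rightarrow> 'i set \<Rightarrow> ('i \<Rightarrow> 'a \<Rightarrow> 'k) \<Rightarrow> bool"
  where "quot_basis V U E b \<longleftrightarrow> finite E \<and> b ` E \<subseteq> V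
    \<and> (\<forall>y\<in>V. \<exists>c. y - (\<Sum>e\<in>E. sc (c e) (b e)) \<in> U)
    \<and> (\<forall>c. (\<Sum>e\<in>E. sc (c e) (b e)) \<in> U \<longrightarrow> (\<forall>e\<in>E. c e = 0))"

lemma quot_basis_coeffs_unique:
  assumes "quot_basis V U E b" "vs.subspace U"
    and "y - (\<Sum>e\<in>E. sc (c e) (b e)) \<in> U" "y - (\<Sum>e\<in>E. sc (d e) (b e)) \<in> U"
  shows "\<forall>e\<in>E. c e = d e"
proof -
  have "(y - (\<Sum>e\<in>E. sc (d e) (b e))) - (y - (\<Sum>e\<in>E. sc (c e) (b e))) \<in> U"
    using assms(2,4,3) by (rule vs.subspace_diff)
  also have "(y - (\<Sum>e\<in>E. sc (d e) (b e))) - (y - (\<Sum>e\<in>E. sc (c e) (b e)))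
      = (\<Sum>e\<in>E. sc (c e - d e) (b e))"
    by (simp add: vs.scale_left_diff_distrib sum_subtractf)
  finally show ?thesis using assms(1) unfolding quot_basis_def by fastforce
qed

text \<open>Extend a basis of U to one of V; the new vectors form the quotient basis.\<close>
lemma quot_basis_exists:
  fixes U V :: "('a \<Rightarrow> 'k::field) set"
  assumes "vs.subspace U" "U \<subseteq> V" "finite S" "V \<subseteq> vs.span S"
  obtains E where "quot_basis V U E id"
proof -
  obtain BU :: "('a \<Rightarrow> 'k::field) set" where BU: "BU \<subseteq> U" "vs.independent BU" "U \<subseteq> vs.span BU"
    by (rule vs.basis_exists)
  obtain B where B: "BU \<subseteq> B" "B \<subseteq> V" "vs.independent B" "V \<subseteq> vs.span B"
    using vs.maximal_independent_subset_extend[of BU V] BU assms(2) by blast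
  have "finite B"
    using vs.independent_span_bound[OF assms(3) B(3)] B(2) assms(4) by blast
  then have "finite BU" using B(1) finite_subset by blast
  have span_BU: "vs.span BU \<subseteq> U" using BU(1) assms(1) by (rule vs.span_minimal)
  define E where "E = B - BU"
  have split: "(\<Sum>b\<in>B. sc (u b) b) = (\<Sum>e\<in>E. sc (u e) e) + (\<Sum>b\<in>BU. sc (u b) b)" for u
    unfolding E_def using B(1) \<open>finite B\<close> by (rule sum.subset_diff)
  have "quot_basis V U E id" unfolding quot_basis_def id_def
  proof (intro conjI allI impI ballI)
    show "finite E" "(\<lambda>x. x) ` E \<subseteq> V" using \<open>finite B\<close> B(2) by (auto simp: E_def)
  next
    fix y assume "y \<in> V"
    then obtain u where "y = (\<Sum>b\<in>B. sc (u b) b)"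
      using B(4) vs.span_finite[OF \<open>finite B\<close>] by blast
    then have "y - (\<Sum>e\<in>E. sc (u e) e) \<in> vs.span BU"
      by (simp add: split vs.span_sum vs.span_scale vs.span_base)
    then show "\<exists>c. y - (\<Sum>e\<in>E. sc (c e) e) \<in> U" using span_BU by blast
  next
    fix c e assume "(\<Sum>e\<in>E. sc (c e) e) \<in> U" "e \<in> E"
    then obtain u where u: "(\<Sum>e\<in>E. sc (c e) e) = (\<Sum>b\<in>BU. sc (u b) b)"
      using BU(3) vs.span_finite[OF \<open>finite BU\<close>] by blast
    define w where "w b = (if b \<in> E then c b else - u b)" for b
    have "(\<Sum>b\<in>B. sc (w b) b) = (\<Sum>e\<in>E. sc (c e) e) - (\<Sum>b\<in>BU. sc (u b) b)"
      unfolding split by (simp add: w_def E_def sum_negf)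
    then have "(\<Sum>b\<in>B. sc (w b) b) = 0" using u by simp
    then have "w e = 0"
      using B(3) vs.dependent_finite[OF \<open>finite B\<close>] \<open>e \<in> E\<close> by (auto simp: E_def)
    then show "c e = 0" using \<open>e \<in> E\<close> by (simp add: w_def)
  qed
  then show ?thesis by (rule that)
qed

lemma quot_basis_pullback:
  assumes "lin_on V h" "h ` V \<subseteq> V'" and ker: "\<forall>x\<in>V. h x \<in> U' \<longleftrightarrow> x \<in> U"
    and "vs.subspace V" "vs.subspace U'"
    and E: "quot_basis V' U' E id" and "v ` E \<subseteq> V" and v: "\<forall>e\<in>E. e - h (v e) \<in> U'"
  shows "quot_basis V U E v"
proof -
  have "finite E" using E by (simp add: quot_basis_def)
  have vE: "\<forall>e\<in>E. v e \<in> V" using \<open>v ` E \<subseteq> V\<close> by blast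
  have lift: "(\<Sum>e\<in>E. sc (c e) e) = h (\<Sum>e\<in>E. sc (c e) (v e)) + (\<Sum>e\<in>E. sc (c e) (e - h (v e)))" for c
    using lin_on_sum[OF assms(1,4) \<open>finite E\<close> vE]
    by (simp add: vs.scale_right_diff_distrib sum_subtractf)
  have rest_U': "(\<Sum>e\<in>E. sc (c e) (e - h (v e))) \<in> U'" for c
    using v \<open>vs.subspace U'\<close> by (intro vs.subspace_sum vs.subspace_scale) auto
  have sum_V: "(\<Sum>e\<in>E. sc (c e) (v e)) \<in> V" for c
    using \<open>v ` E \<subseteq> V\<close> \<open>vs.subspace V\<close> by (intro vs.subspace_sum vs.subspace_scale) auto
  show ?thesis unfolding quot_basis_def
  proof (intro conjI allI impI ballI)
    show "finite E" "v ` E \<subseteq> V" by fact+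
  next
    fix x assume "x \<in> V"
    then have "h x \<in> V'" using assms(2) by blast
    then obtain c where c: "h x - (\<Sum>e\<in>E. sc (c e) e) \<in> U'"
      using E unfolding quot_basis_def by auto
    have "h (x - (\<Sum>e\<in>E. sc (c e) (v e))) = (h x - (\<Sum>e\<in>E. sc (c e) e)) + (\<Sum>e\<in>E. sc (c e) (e - h (v e)))"
      using lin_on_diff[OF assms(1,4) \<open>x \<in> V\<close> sum_V] lift by simp
    also have "\<dots> \<in> U'" using c rest_U' \<open>vs.subspace U'\<close> by (simp add: vs.subspace_add)
    finally show "\<exists>c. x - (\<Sum>e\<in>E. sc (c e) (v e)) \<in> U"
      using ker \<open>x \<in> V\<close> sum_V \<open>vs.subspace V\<close> by (metis vs.subspace_diff)
  next
    fix c e assume "(\<Sum>e\<in>E. sc (c e) (v e)) \<in> U" "e \<in> E"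
    then have "h (\<Sum>e\<in>E. sc (c e) (v e)) \<in> U'" using ker sum_V by blast
    then have "(\<Sum>e\<in>E. sc (c e) e) \<in> U'"
      unfolding lift using rest_U' \<open>vs.subspace U'\<close> by (simp add: vs.subspace_add)
    then show "c e = 0" using E \<open>e \<in> E\<close> by (simp add: quot_basis_def)
  qed
qed

lemma quot_basis_coords:
  assumes E: "quot_basis V U E b" and "vs.subspace V" "vs.subspace U"
  obtains coord where
    "\<And>x d e. x \<in> V \<Longrightarrow> x - (\<Sum>e\<in>E. sc (d e) (b e)) \<in> U \<Longrightarrow> e \<in> E \<Longrightarrow> coord x e = d e"
    "\<And>x z e. x \<in> V \<Longrightarrow> z \<in> V \<Longrightarrow> e \<in> E \<Longrightarrow> coord (x + z) e = coord x e + coord z e"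
    "\<And>a x e. x \<in> V \<Longrightarrow> e \<in> E \<Longrightarrow> coord (sc a x) e = a * coord x e"
proof -
  define coord where "coord x = (SOME d. x - (\<Sum>e\<in>E. sc (d e) (b e)) \<in> U)" for x
  have coord: "x - (\<Sum>e\<in>E. sc (coord x e) (b e)) \<in> U" if "x \<in> V" for x
  proof -
    have "\<exists>d. x - (\<Sum>e\<in>E. sc (d e) (b e)) \<in> U" using E that by (simp add: quot_basis_def)
    then show ?thesis unfolding coord_def by (rule someI_ex)
  qed
  have coord_eq: "coord x e = d e" if "x \<in> V" "x - (\<Sum>e\<in>E. sc (d e) (b e)) \<in> U" "e \<in> E" for x d e
    using quot_basis_coeffs_unique[OF E \<open>vs.subspace U\<close> coord[OF that(1)] that(2)] that(3) by blast
  have coord_add: "coord (x + z) e = coord x e + coord z e" if "x \<in> V" "z \<in> V" "e \<in> E" for x z e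
  proof -
    have "(x - (\<Sum>e\<in>E. sc (coord x e) (b e))) + (z - (\<Sum>e\<in>E. sc (coord z e) (b e))) \<in> U"
      using coord that \<open>vs.subspace U\<close> by (simp add: vs.subspace_add)
    then have "(x + z) - (\<Sum>e\<in>E. sc (coord x e + coord z e) (b e)) \<in> U"
      by (simp add: sum.distrib algebra_simps)
    then show ?thesis by (rule coord_eq[OF vs.subspace_add[OF \<open>vs.subspace V\<close> that(1,2)] _ that(3)])
  qed
  have coord_scale: "coord (sc a x) e = a * coord x e" if "x \<in> V" "e \<in> E" for a x e
  proof -
    have "sc a (x - (\<Sum>e\<in>E. sc (coord x e) (b e))) \<in> U"
      using coord that \<open>vs.subspace U\<close> by (simp add: vs.subspace_scale)
    then have "sc a x - (\<Sum>e\<in>E. sc (a * coord x e) (b e)) \<in> U"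
      by (simp add: vs.scale_right_diff_distrib vs.scale_sum_right)
    then show ?thesis by (rule coord_eq[OF vs.subspace_scale[OF \<open>vs.subspace V\<close> that(1)] _ that(2)])
  qed
  from coord_eq coord_add coord_scale show ?thesis by (rule that)
qed

lemma quot_basis_extend_functional:
  assumes E: "quot_basis V U E b" and "vs.subspace V" "vs.subspace U" "U \<subseteq> V"
  obtains l where "l \<in> dual_quot V U" "\<forall>e\<in>E. l (b e) = c e"
proof -
  have "finite E" using E by (simp add: quot_basis_def)
  obtain coord where coord_eq: "\<And>x d e. x \<in> V \<Longrightarrow> x - (\<Sum>e\<in>E. sc (d e) (b e)) \<in> U \<Longrightarrow> e \<in> E \<Longrightarrow> coord x e = d e"
    and coord_add: "\<And>x z e. x \<in> V \<Longrightarrow> z \<in> V \<Longrightarrow> e \<in> E \<Longrightarrow> coord (x + z) e = coord x e + coord z e"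
    and coord_scale: "\<And>a x e. x \<in> V \<Longrightarrow> e \<in> E \<Longrightarrow> coord (sc a x) e = a * coord x e"
    using quot_basis_coords[OF assms(1-3)] by blast
  define l where "l x = (if x \<in> V then \<Sum>e\<in>E. c e * coord x e else 0)" for x
  have "l \<in> dual_quot V U"
    unfolding dual_quot_def functional_on_def
  proof (intro CollectI conjI ballI allI impI)
    fix x z assume "x \<in> V" "z \<in> V"
    then show "l (x + z) = l x + l z"
      using \<open>vs.subspace V\<close> by (simp add: l_def coord_add vs.subspace_add sum.distrib distrib_left)
  next
    fix a x assume "x \<in> V"
    then show "l (sc a x) = a * l x"
      using \<open>vs.subspace V\<close> by (simp add: l_def coord_scale vs.subspace_scale sum_distrib_left algebra_simps)
  next
    fix u assume "u \<in> U"
    then have "u \<in> V" "coord u e = 0" if "e \<in> E" for e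
      using coord_eq[of u "\<lambda>_. 0"] \<open>U \<subseteq> V\<close> that by auto
    then show "l u = 0" by (simp add: l_def)
  qed (simp add: l_def)
  moreover have "l (b e0) = c e0" if "e0 \<in> E" for e0
  proof -
    have "b e0 \<in> V" using E that by (auto simp: quot_basis_def)
    have "(\<Sum>e\<in>E. sc (if e = e0 then 1 else 0) (b e)) = b e0"
      using \<open>finite E\<close> that by (simp add: if_distrib[of "\<lambda>t. sc t _"] cong: if_cong)
    then have "coord (b e0) e = (if e = e0 then 1 else 0)" if "e \<in> E" for e
      using \<open>b e0 \<in> V\<close> vs.subspace_0[OF \<open>vs.subspace U\<close>] that by (intro coord_eq) auto
    then show ?thesis using \<open>b e0 \<in> V\<close> \<open>finite E\<close> that
      by (simp add: l_def if_distrib[of "\<lambda>t. _ * t"] cong: if_cong)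
  qed
  ultimately show ?thesis using that by blast
qed

lemma quot_basis_functional_eq_0:
  assumes E: "quot_basis V U E b" and "vs.subspace V"
    and l: "l \<in> dual_quot V U" and l_b: "\<forall>e\<in>E. l (b e) = 0"
  shows "l = 0"
proof
  fix x
  have fl: "functional_on V l" using l by (simp add: dual_quot_def)
  show "l x = 0 x"
  proof (cases "x \<in> V")
    case True
    then obtain c where c: "x - (\<Sum>e\<in>E. sc (c e) (b e)) \<in> U" using E by (auto simp: quot_basis_def)
    define s where "s = (\<Sum>e\<in>E. sc (c e) (b e))"
    have "finite E" and bV: "\<forall>e\<in>E. b e \<in> V" using E by (auto simp: quot_basis_def)
    have "s \<in> V" unfolding s_def using bV \<open>vs.subspace V\<close> by (auto intro!: vs.subspace_sum vs.subspace_scale)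
    have "l s = (\<Sum>e\<in>E. c e * l (b e))"
      unfolding s_def using fl \<open>vs.subspace V\<close> \<open>finite E\<close> bV by (rule functional_on_sum)
    then have "l s = 0" using l_b by simp
    have "l (x - s) = 0" using c l by (simp add: s_def dual_quot_def)
    moreover have "l x = l (x - s) + l s"
      using fl vs.subspace_diff[OF \<open>vs.subspace V\<close> True \<open>s \<in> V\<close>] \<open>s \<in> V\<close>
      unfolding functional_on_def by (metis diff_add_cancel)
    ultimately show ?thesis using \<open>l s = 0\<close> by simp
  next
    case False
    then show ?thesis using fl by (simp add: functional_on_def)
  qed
qed

text \<open>A functional l on V/U is sent to the class of the vector with coordinates l (v e).\<close>
lemma quot_iso_dual_of_quot_bases:
  fixes V U :: "('a \<Rightarrow> 'k::field) set" and V' U' :: "('b \<Rightarrow> 'k) set"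
  assumes V: "quot_basis V U E v" and V': "quot_basis V' U' E id"
    and "vs.subspace V" "vs.subspace U" "U \<subseteq> V" "vs.subspace V'" "vs.subspace U'" "U' \<subseteq> V'"
  shows "quot_iso (dual_quot V U) {0} V' U'"
proof -
  define g where "g l = (\<Sum>e\<in>E. sc (l (v e)) e)" for l :: "('a \<Rightarrow> 'k) \<Rightarrow> 'k"
  have "E \<subseteq> V'" using V' by (simp add: quot_basis_def)
  show ?thesis unfolding quot_iso_def
  proof (intro conjI exI[of _ g] ballI)
    show "{0} \<subseteq> dual_quot V U" by (auto simp: dual_quot_def functional_on_def)
    show "lin_on (dual_quot V U) g"
      by (simp add: lin_on_def g_def sc_apply vs.scale_left_distrib sum.distrib vs.scale_sum_right)
    show "g ` dual_quot V U \<subseteq> V'"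
      unfolding g_def using \<open>E \<subseteq> V'\<close> \<open>vs.subspace V'\<close> by (auto intro!: vs.subspace_sum vs.subspace_scale)
  next
    fix y assume "y \<in> V'"
    then obtain c where c: "y - (\<Sum>e\<in>E. sc (c e) e) \<in> U'" using V' by (auto simp: quot_basis_def)
    obtain l where l: "l \<in> dual_quot V U" "\<forall>e\<in>E. l (v e) = c e"
      using quot_basis_extend_functional[OF V \<open>vs.subspace V\<close> \<open>vs.subspace U\<close> \<open>U \<subseteq> V\<close>] by metis
    have "g l = (\<Sum>e\<in>E. sc (c e) e)" unfolding g_def using l(2) by simp
    then show "\<exists>l\<in>dual_quot V U. y - g l \<in> U'" using l(1) c by metis
  next
    fix l assume l: "l \<in> dual_quot V U"
    have "g l \<in> U' \<longleftrightarrow> (\<forall>e\<in>E. l (v e) = 0)"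
    proof
      assume "g l \<in> U'"
      then show "\<forall>e\<in>E. l (v e) = 0" using V' unfolding g_def quot_basis_def by auto
    next
      assume "\<forall>e\<in>E. l (v e) = 0"
      then have "g l = 0" by (simp add: g_def)
      then show "g l \<in> U'" using vs.subspace_0[OF \<open>vs.subspace U'\<close>] by simp
    qed
    also have "\<dots> \<longleftrightarrow> l \<in> {0}"
      using quot_basis_functional_eq_0[OF V \<open>vs.subspace V\<close> l] by auto
    finally show "g l \<in> U' \<longleftrightarrow> l \<in> {0}" .
  qed fact
qed

lemma finitely_supported_in_span:
  fixes y :: "'b \<Rightarrow> 'k::field"
  assumes "finite S" "\<forall>x. y x \<noteq> 0 \<longrightarrow> x \<in> S"
  shows "y \<in> vs.span ((\<lambda>s x. if x = s then 1 else 0) ` S)"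
proof -
  have "y = (\<Sum>s\<in>S. sc (y s) (\<lambda>x. if x = s then 1 else 0))"
  proof
    fix x
    have "(\<Sum>s\<in>S. sc (y s) (\<lambda>x. if x = s then 1 else 0)) x = (\<Sum>s\<in>S. if x = s then y s else 0)"
      by (simp add: sum_fun_apply sc_apply if_distrib[of "\<lambda>t. _ * t"] cong: if_cong)
    also have "\<dots> = y x" using assms by auto
    finally show "y x = (\<Sum>s\<in>S. sc (y s) (\<lambda>x. if x = s then 1 else 0)) x" by simp
  qed
  also have "\<dots> \<in> vs.span ((\<lambda>s x. if x = s then 1 else 0) ` S)"
    by (intro vs.span_sum vs.span_scale vs.span_base) auto
  finally show ?thesis .
qed

lemma quot_iso_dual:
  fixes V U :: "('a \<Rightarrow> 'k::field) set" and V' U' :: "('b \<Rightarrow> 'k) set"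
  assumes iso: "quot_iso V U V' U'"
    and "vs.subspace V" "vs.subspace U" "vs.subspace V'" "vs.subspace U'"
    and "finite S" and supp: "\<forall>y\<in>V'. \<forall>x. y x \<noteq> 0 \<longrightarrow> x \<in> S"
  shows "quot_iso (dual_quot V U) {0} V' U'"
proof -
  obtain h where "U \<subseteq> V" "U' \<subseteq> V'" and h_lin: "lin_on V h" and h_V: "h ` V \<subseteq> V'"
    and h_surj: "\<forall>y\<in>V'. \<exists>x\<in>V. y - h x \<in> U'" and h_ker: "\<forall>x\<in>V. h x \<in> U' \<longleftrightarrow> x \<in> U"
    using iso unfolding quot_iso_def by blast
  have "V' \<subseteq> vs.span ((\<lambda>s x. if x = s then 1 else 0) ` S)"
    using finitely_supported_in_span[OF \<open>finite S\<close>] supp by blast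
  then obtain E where E: "quot_basis V' U' E id"
    using quot_basis_exists[OF \<open>vs.subspace U'\<close> \<open>U' \<subseteq> V'\<close>] \<open>finite S\<close> by blast
  have "\<forall>e\<in>E. \<exists>x. x \<in> V \<and> e - h x \<in> U'" using h_surj E by (auto simp: quot_basis_def)
  then obtain v where "\<forall>e\<in>E. v e \<in> V \<and> e - h (v e) \<in> U'" by (rule bchoice[THEN exE])
  then have v: "v ` E \<subseteq> V" "\<forall>e\<in>E. e - h (v e) \<in> U'" by auto
  have "quot_basis V U E v"
    by (rule quot_basis_pullback[where h=h and v=v, OF h_lin h_V h_ker assms(2,5) E v])
  then show ?thesis
    using E assms(2,3) \<open>U \<subseteq> V\<close> assms(4,5) \<open>U' \<subseteq> V'\<close> by (rule quot_iso_dual_of_quot_bases)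
qed

section \<open>Multi-indices, the product of R and the contraction action\<close>

lemma finite_below_midx:
  assumes "\<beta> \<in> midx r"
  shows "finite {\<gamma>. \<gamma> \<le> \<beta>}"
proof -
  let ?of_list = "\<lambda>xs i. if i < r then xs ! i else 0"
  have "{\<gamma>. \<gamma> \<le> \<beta>} \<subseteq> ?of_list ` {xs. set xs \<subseteq> {..tdeg r \<beta>} \<and> length xs = r}"
  proof
    fix \<gamma> :: "nat \<Rightarrow> nat" assume "\<gamma> \<in> {\<gamma>. \<gamma> \<le> \<beta>}"
    then have le: "\<gamma> i \<le> \<beta> i" for i by (simp add: le_fun_def)
    have "\<gamma> i \<le> tdeg r \<beta>" if "i < r" for i
      using le[of i] member_le_sum[of i "{..<r}" \<beta>] that by (simp add: tdeg_def)
    moreover have "\<gamma> = ?of_list (map \<gamma> [0..<r])"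
    proof
      fix i show "\<gamma> i = ?of_list (map \<gamma> [0..<r]) i"
        using le[of i] assms by (cases "i < r") (auto simp: midx_def)
    qed
    ultimately show "\<gamma> \<in> ?of_list ` {xs. set xs \<subseteq> {..tdeg r \<beta>} \<and> length xs = r}"
      by (intro image_eqI) auto
  qed
  moreover have "finite {xs. set xs \<subseteq> {..tdeg r \<beta>} \<and> length xs = r}"
    by (rule finite_lists_length_eq) simp
  ultimately show ?thesis by (meson finite_imageI finite_subset)
qed

lemma ps_mult_diff_eq_sum_between:
  fixes \<gamma> \<delta> :: "nat \<Rightarrow> nat"
  assumes "\<gamma> \<le> \<delta>"
  shows "ps_mult \<phi> \<psi> (\<delta> - \<gamma>) = (\<Sum>\<beta>\<in>{\<beta>. \<gamma> \<le> \<beta> \<and> \<beta> \<le> \<delta>}. \<phi> (\<delta> - \<beta>) * \<psi> (\<beta> - \<gamma>))"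
  unfolding ps_mult_def
proof (rule sum.reindex_bij_witness[where i="\<lambda>\<beta>. \<delta> - \<beta>" and j="\<lambda>\<alpha>. \<delta> - \<alpha>"])
  fix \<alpha> :: "nat \<Rightarrow> nat" assume "\<alpha> \<in> {\<alpha>. \<alpha> \<le> \<delta> - \<gamma>}"
  then have pt: "\<alpha> k \<le> \<delta> k - \<gamma> k \<and> \<gamma> k \<le> \<delta> k" for k using assms by (auto simp: le_fun_def)
  have "\<delta> - (\<delta> - \<alpha>) = \<alpha>"
  proof
    fix k show "(\<delta> - (\<delta> - \<alpha>)) k = \<alpha> k" using pt[of k] by (simp only: minus_apply) arith
  qed
  moreover have "\<delta> - \<alpha> - \<gamma> = \<delta> - \<gamma> - \<alpha>" by (simp add: fun_eq_iff add.commute)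
  moreover have "\<gamma> \<le> \<delta> - \<alpha>"
  proof (rule le_funI)
    fix k show "\<gamma> k \<le> (\<delta> - \<alpha>) k" using pt[of k] by (simp only: minus_apply) arith
  qed
  ultimately show "\<delta> - (\<delta> - \<alpha>) = \<alpha>" "\<delta> - \<alpha> \<in> {\<beta>. \<gamma> \<le> \<beta> \<and> \<beta> \<le> \<delta>}"
    "\<phi> (\<delta> - (\<delta> - \<alpha>)) * \<psi> (\<delta> - \<alpha> - \<gamma>) = \<phi> \<alpha> * \<psi> (\<delta> - \<gamma> - \<alpha>)"
    by (auto simp: le_fun_def)
next
  fix \<beta> :: "nat \<Rightarrow> nat" assume "\<beta> \<in> {\<beta>. \<gamma> \<le> \<beta> \<and> \<beta> \<le> \<delta>}"
  then have pt: "\<gamma> k \<le> \<beta> k \<and> \<beta> k \<le> \<delta> k" for k by (auto simp: le_fun_def)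
  show "\<delta> - (\<delta> - \<beta>) = \<beta>"
  proof
    fix k show "(\<delta> - (\<delta> - \<beta>)) k = \<beta> k" using pt[of k] by simp
  qed
  show "\<delta> - \<beta> \<in> {\<alpha>. \<alpha> \<le> \<delta> - \<gamma>}" by (auto intro!: le_funI simp: pt diff_le_mono2)
qed

lemma tdeg_diff_le: "tdeg r (\<beta> - \<gamma>) \<le> tdeg r \<beta>"
  unfolding tdeg_def by (rule sum_mono) simp

lemma DP_support_midx: "F \<in> DP r \<Longrightarrow> F \<beta> \<noteq> 0 \<Longrightarrow> \<beta> \<in> midx r"
  by (auto simp: DP_def PS_def)

lemma DP_finite_support: "F \<in> DP r \<Longrightarrow> finite {\<beta>. F \<beta> \<noteq> 0}"
  by (auto simp: DP_def)

definition supp_downset :: "((nat \<Rightarrow> nat) \<Rightarrow> 'k::zero) \<Rightarrow> (nat \<Rightarrow> nat) set" where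
  "supp_downset F = {\<gamma>. \<exists>\<delta>. F \<delta> \<noteq> 0 \<and> \<gamma> \<le> \<delta>}"

lemma finite_supp_downset:
  assumes "F \<in> DP r"
  shows "finite (supp_downset F)"
proof -
  have "supp_downset F = (\<Union>\<delta>\<in>{\<delta>. F \<delta> \<noteq> 0}. {\<gamma>. \<gamma> \<le> \<delta>})"
    by (auto simp: supp_downset_def)
  then show ?thesis
    using assms by (auto intro!: finite_below_midx DP_support_midx DP_finite_support)
qed

lemma below_midx:
  assumes "\<gamma> \<le> \<beta>" "\<beta> \<in> midx r"
  shows "\<gamma> \<in> midx r"
  unfolding midx_def
proof (intro CollectI allI impI)
  fix i assume "r \<le> i"
  then show "\<gamma> i = 0" using assms le_funD[of \<gamma> \<beta> i] by (simp add: midx_def)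
qed

lemma supp_downset_midx:
  assumes "F \<in> DP r"
  shows "supp_downset F \<subseteq> midx r"
proof
  fix \<gamma> assume "\<gamma> \<in> supp_downset F"
  then obtain \<delta> where "F \<delta> \<noteq> 0" "\<gamma> \<le> \<delta>" by (auto simp: supp_downset_def)
  then show "\<gamma> \<in> midx r" using below_midx DP_support_midx[OF assms] by blast
qed

lemma contr_support:
  assumes "contr \<phi> F \<gamma> \<noteq> 0"
  shows "\<gamma> \<in> supp_downset F"
proof -
  obtain \<beta> where "F \<beta> \<noteq> 0" "(if \<gamma> \<le> \<beta> then \<phi> (\<beta> - \<gamma>) * F \<beta> else 0) \<noteq> 0"
    using assms unfolding contr_def by (auto elim: sum.not_neutral_contains_not_neutral)
  then show ?thesis unfolding supp_downset_def by (auto split: if_splits)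
qed

lemma contr_DP:
  assumes "F \<in> DP r"
  shows "contr \<phi> F \<in> DP r"
proof -
  have "{\<beta>. contr \<phi> F \<beta> \<noteq> 0} \<subseteq> supp_downset F" using contr_support by blast
  then show ?thesis
    using supp_downset_midx[OF assms] finite_subset finite_supp_downset[OF assms]
    unfolding DP_def PS_def by blast
qed

lemma contr_add: "contr (\<phi> + \<psi>) F = contr \<phi> F + contr \<psi> F"
  by (simp add: contr_def fun_eq_iff sum.distrib[symmetric] algebra_simps if_distrib cong: if_cong)

lemma contr_scale: "contr (sc c \<phi>) F = sc c (contr \<phi> F)"
  by (simp add: contr_def fun_eq_iff sc_def sum_distrib_left algebra_simps if_distrib cong: if_cong)

lemma linear_contr: "Vector_Spaces.linear sc sc (\<lambda>\<phi>. contr \<phi> F)"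
  unfolding linear_iff using vs.vector_space_axioms by (simp add: contr_add contr_scale)

lemma contr_at_0_indicator:
  assumes "G \<in> DP r"
  shows "contr (\<lambda>\<alpha>. if \<alpha> = \<beta> then 1 else 0) G 0 = G \<beta>"
proof -
  have "contr (\<lambda>\<alpha>. if \<alpha> = \<beta> then 1 else 0) G 0 = (\<Sum>\<beta>'\<in>{\<beta>'. G \<beta>' \<noteq> 0}. if \<beta>' = \<beta> then G \<beta>' else 0)"
    unfolding contr_def by (intro sum.cong) auto
  also have "\<dots> = G \<beta>" using DP_finite_support[OF assms] by simp
  finally show ?thesis .
qed

lemma ps_mult_PS:
  assumes "\<phi> \<in> PS r" "\<psi> \<in> PS r"
  shows "ps_mult \<phi> \<psi> \<in> PS r"
  unfolding PS_def
proof (intro CollectI allI impI)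
  fix \<gamma> assume "\<gamma> \<notin> midx r"
  have "\<phi> \<alpha> * \<psi> (\<gamma> - \<alpha>) = 0" if "\<alpha> \<le> \<gamma>" for \<alpha>
  proof (cases "\<alpha> \<in> midx r")
    case True
    have "\<gamma> - \<alpha> \<notin> midx r"
    proof
      assume "\<gamma> - \<alpha> \<in> midx r"
      have "\<gamma> i = 0" if "r \<le> i" for i
        using \<open>\<gamma> - \<alpha> \<in> midx r\<close> True le_funD[OF \<open>\<alpha> \<le> \<gamma>\<close>, of i] that by (simp add: midx_def)
      then show False using \<open>\<gamma> \<notin> midx r\<close> by (simp add: midx_def)
    qed
    then show ?thesis using assms(2) by (simp add: PS_def)
  next
    case False
    then show ?thesis using assms(1) by (simp add: PS_def)
  qed
  then show "ps_mult \<phi> \<psi> \<gamma> = 0" unfolding ps_mult_def by (intro sum.neutral) auto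
qed

lemma ps_mult_add_left: "ps_mult (\<phi> + \<phi>') \<psi> = ps_mult \<phi> \<psi> + ps_mult \<phi>' \<psi>"
  by (simp add: ps_mult_def fun_eq_iff sum.distrib[symmetric] algebra_simps)

lemma ps_mult_scale_left: "ps_mult (sc c \<phi>) \<psi> = sc c (ps_mult \<phi> \<psi>)"
  by (simp add: ps_mult_def fun_eq_iff sc_def sum_distrib_left algebra_simps)

lemma ps_mult_zero_left: "ps_mult 0 \<psi> = 0"
  by (simp add: ps_mult_def fun_eq_iff)

lemma sum_supp_downset_between:
  assumes F: "F \<in> DP r" and "F \<delta> \<noteq> 0"
  shows "(\<Sum>\<beta>\<in>supp_downset F. if \<gamma> \<le> \<beta> \<and> \<beta> \<le> \<delta> then g \<beta> else 0)
    = (\<Sum>\<beta>\<in>{\<beta>. \<gamma> \<le> \<beta> \<and> \<beta> \<le> \<delta>}. g \<beta>)"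
proof -
  have "{\<beta> \<in> supp_downset F. \<gamma> \<le> \<beta> \<and> \<beta> \<le> \<delta>} = {\<beta>. \<gamma> \<le> \<beta> \<and> \<beta> \<le> \<delta>}"
    using \<open>F \<delta> \<noteq> 0\<close> by (auto simp: supp_downset_def)
  then show ?thesis by (simp only: sum.inter_filter[OF finite_supp_downset[OF F], symmetric])
qed

lemma contr_ps_mult:
  assumes F: "F \<in> DP r"
  shows "contr (ps_mult \<phi> \<psi>) F = contr \<psi> (contr \<phi> F)"
proof
  fix \<gamma>
  let ?S = "{\<delta>. F \<delta> \<noteq> 0}" and ?D = "supp_downset F"
  let ?t = "\<lambda>\<beta> \<delta>. if \<gamma> \<le> \<beta> \<and> \<beta> \<le> \<delta> then \<psi> (\<beta> - \<gamma>) * (\<phi> (\<delta> - \<beta>) * F \<delta>) else 0"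
  have "contr \<psi> (contr \<phi> F) \<gamma> = (\<Sum>\<beta>\<in>?D. if \<gamma> \<le> \<beta> then \<psi> (\<beta> - \<gamma>) * contr \<phi> F \<beta> else 0)"
    unfolding contr_def[of \<psi>] using finite_supp_downset[OF F]
    by (rule sum.mono_neutral_left) (auto dest: contr_support)
  also have "\<dots> = (\<Sum>\<beta>\<in>?D. \<Sum>\<delta>\<in>?S. ?t \<beta> \<delta>)"
  proof (rule sum.cong[OF refl])
    fix \<beta>
    show "(if \<gamma> \<le> \<beta> then \<psi> (\<beta> - \<gamma>) * contr \<phi> F \<beta> else 0) = (\<Sum>\<delta>\<in>?S. ?t \<beta> \<delta>)"
      by (cases "\<gamma> \<le> \<beta>") (simp_all add: contr_def sum_distrib_left if_distrib[of "\<lambda>x. _ * x"] cong: if_cong)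
  qed
  also have "\<dots> = (\<Sum>\<delta>\<in>?S. \<Sum>\<beta>\<in>?D. ?t \<beta> \<delta>)"
    by (rule sum.swap)
  also have "\<dots> = (\<Sum>\<delta>\<in>?S. if \<gamma> \<le> \<delta> then ps_mult \<phi> \<psi> (\<delta> - \<gamma>) * F \<delta> else 0)"
  proof (rule sum.cong[OF refl])
    fix \<delta> assume "\<delta> \<in> ?S"
    then have "(\<Sum>\<beta>\<in>?D. ?t \<beta> \<delta>) = (\<Sum>\<beta>\<in>{\<beta>. \<gamma> \<le> \<beta> \<and> \<beta> \<le> \<delta>}. \<psi> (\<beta> - \<gamma>) * (\<phi> (\<delta> - \<beta>) * F \<delta>))"
      by (intro sum_supp_downset_between[OF F]) simp
    also have "\<dots> = (if \<gamma> \<le> \<delta> then ps_mult \<phi> \<psi> (\<delta> - \<gamma>) * F \<delta> else 0)"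
    proof (cases "\<gamma> \<le> \<delta>")
      case True
      then show ?thesis by (simp add: ps_mult_diff_eq_sum_between sum_distrib_left mult_ac)
    next
      case False
      then have "{\<beta>. \<gamma> \<le> \<beta> \<and> \<beta> \<le> \<delta>} = {}" using order_trans by blast
      with False show ?thesis by (simp only: sum.empty if_False)
    qed
    finally show "(\<Sum>\<beta>\<in>?D. ?t \<beta> \<delta>) = (if \<gamma> \<le> \<delta> then ps_mult \<phi> \<psi> (\<delta> - \<gamma>) * F \<delta> else 0)" .
  qed
  also have "\<dots> = contr (ps_mult \<phi> \<psi>) F \<gamma>"
    by (simp add: contr_def)
  finally show "contr (ps_mult \<phi> \<psi>) F \<gamma> = contr \<psi> (contr \<phi> F) \<gamma>" ..
qed

lemma ann_pow_iff_degree: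
  fixes f \<phi> :: "(nat \<Rightarrow> nat) \<Rightarrow> 'k::field"
  assumes f: "f \<in> DP r" and "\<phi> \<in> PS r"
  shows "ann_pow r f \<phi> k \<longleftrightarrow> (\<forall>\<beta>. contr \<phi> f \<beta> \<noteq> 0 \<longrightarrow> int (tdeg r \<beta>) < k)"
proof
  assume ann: "ann_pow r f \<phi> k"
  show "\<forall>\<beta>. contr \<phi> f \<beta> \<noteq> 0 \<longrightarrow> int (tdeg r \<beta>) < k"
  proof (intro allI impI, rule ccontr)
    fix \<beta> assume nz: "contr \<phi> f \<beta> \<noteq> 0" and high: "\<not> int (tdeg r \<beta>) < k"
    have "contr \<phi> f \<in> DP r" using f by (rule contr_DP)
    then have "\<beta> \<in> midx r" using nz DP_support_midx[of "contr \<phi> f"] by blast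
    define x\<beta> where "x\<beta> = (\<lambda>\<alpha>. if \<alpha> = \<beta> then 1 else (0::'k))"
    \<comment> \<open>x^\<beta> lies in m^k, and (\<phi> x^\<beta>) o f evaluated at 0 is the coefficient of X^[\<beta>] in \<phi> o f.\<close>
    have "x\<beta> \<in> mpow r k"
      using \<open>\<beta> \<in> midx r\<close> high by (auto simp: x\<beta>_def mpow_def PS_def)
    then have "contr (ps_mult \<phi> x\<beta>) f = 0" using ann by (simp add: ann_pow_def Ann_def)
    then have "contr x\<beta> (contr \<phi> f) 0 = 0" by (simp add: contr_ps_mult[OF f])
    moreover have "contr x\<beta> (contr \<phi> f) 0 = contr \<phi> f \<beta>"
      unfolding x\<beta>_def using \<open>contr \<phi> f \<in> DP r\<close> by (rule contr_at_0_indicator)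
    ultimately show False using nz by simp
  qed
next
  assume deg: "\<forall>\<beta>. contr \<phi> f \<beta> \<noteq> 0 \<longrightarrow> int (tdeg r \<beta>) < k"
  show "ann_pow r f \<phi> k" unfolding ann_pow_def Ann_def
  proof (intro ballI CollectI conjI)
    fix \<psi> :: "(nat \<Rightarrow> nat) \<Rightarrow> 'k" assume \<psi>: "\<psi> \<in> mpow r k"
    then show "ps_mult \<phi> \<psi> \<in> PS r" by (intro ps_mult_PS[OF \<open>\<phi> \<in> PS r\<close>]) (simp add: mpow_def)
    have "\<psi> (\<beta> - \<gamma>) = 0" if "contr \<phi> f \<beta> \<noteq> 0" for \<beta> \<gamma>
    proof -
      have "int (tdeg r \<beta>) < k" using deg that by blast
      then have "int (tdeg r (\<beta> - \<gamma>)) < k" using tdeg_diff_le[of r \<beta> \<gamma>] by linarith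
      then show ?thesis using \<psi> by (simp add: mpow_def)
    qed
    then have "contr \<psi> (contr \<phi> f) \<gamma> = 0" for \<gamma>
      unfolding contr_def[of \<psi>] by (intro sum.neutral) simp
    then have "contr \<psi> (contr \<phi> f) = 0" by (simp add: fun_eq_iff)
    then show "contr (ps_mult \<phi> \<psi>) f = 0" by (simp add: contr_ps_mult[OF f])
  qed
qed

section \<open>The filtration quotients Q_A(a)\<close>

lemma subspace_PS: "vs.subspace (PS r)"
  by (auto simp: vs.subspace_def PS_def sc_def)

lemma subspace_mpow: "vs.subspace (mpow r s)"
  by (auto simp: vs.subspace_def mpow_def PS_def sc_def)

lemma subspace_Ann: "vs.subspace (Ann r f)"
proof -
  have "Ann r f = PS r \<inter> {\<phi>. contr \<phi> f = 0}" by (auto simp: Ann_def)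
  then show ?thesis
    by (simp add: vs.subspace_inter subspace_PS vsp.linear_subspace_kernel[OF linear_contr])
qed

lemma subspace_mA_pre: "vs.subspace (mA_pre r f i)"
  unfolding mA_pre_def by (intro subspace_ssum subspace_mpow subspace_Ann)

lemma subspace_ann_pow: "vs.subspace {\<phi> \<in> mA_pre r f i. ann_pow r f \<phi> k}"
proof -
  have "vs.subspace {\<phi>. ann_pow r f \<phi> k}"
  proof (rule vs.subspaceI)
    show "0 \<in> {\<phi>. ann_pow r f \<phi> k}"
      using vs.subspace_0[OF subspace_Ann[of r f]] by (simp add: ann_pow_def ps_mult_zero_left)
  next
    fix \<phi> \<phi>' assume "\<phi> \<in> {\<phi>. ann_pow r f \<phi> k}" "\<phi>' \<in> {\<phi>. ann_pow r f \<phi> k}"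
    then show "\<phi> + \<phi>' \<in> {\<phi>. ann_pow r f \<phi> k}"
      using vs.subspace_add[OF subspace_Ann[of r f]] by (simp add: ann_pow_def ps_mult_add_left)
  next
    fix c \<phi> assume "\<phi> \<in> {\<phi>. ann_pow r f \<phi> k}"
    then show "sc c \<phi> \<in> {\<phi>. ann_pow r f \<phi> k}"
      using vs.subspace_scale[OF subspace_Ann[of r f]] by (simp add: ann_pow_def ps_mult_scale_left)
  qed
  moreover have "{\<phi> \<in> mA_pre r f i. ann_pow r f \<phi> k} = mA_pre r f i \<inter> {\<phi>. ann_pow r f \<phi> k}"
    by blast
  ultimately show ?thesis by (simp add: vs.subspace_inter subspace_mA_pre)
qed

lemma subspace_C_pre: "vs.subspace (C_pre r f j a i)"
  unfolding C_pre_def by (intro subspace_ssum subspace_ann_pow subspace_mA_pre)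

lemma subspace_act: "vs.subspace (act (mpow r s) f)"
  unfolding act_def by (rule vsp.linear_subspace_image[OF linear_contr subspace_mpow])

lemma le_deg_eq_Int: "le_deg r V t = V \<inter> le_deg r UNIV t"
  by (auto simp: le_deg_def)

lemma subspace_le_deg:
  fixes V :: "((nat \<Rightarrow> nat) \<Rightarrow> 'k::field) set"
  assumes "vs.subspace V"
  shows "vs.subspace (le_deg r V t)"
proof -
  have "vs.subspace (le_deg r (UNIV :: ((nat \<Rightarrow> nat) \<Rightarrow> 'k) set) t)"
  proof (rule vs.subspaceI)
    fix F G :: "(nat \<Rightarrow> nat) \<Rightarrow> 'k" assume "F \<in> le_deg r UNIV t" "G \<in> le_deg r UNIV t"
    moreover have "F \<beta> \<noteq> 0 \<or> G \<beta> \<noteq> 0" if "(F + G) \<beta> \<noteq> 0" for \<beta> using that by auto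
    ultimately show "F + G \<in> le_deg r UNIV t" unfolding le_deg_def by blast
  qed (auto simp: le_deg_def sc_def)
  then show ?thesis unfolding le_deg_eq_Int[of r V] using assms by (intro vs.subspace_inter)
qed

lemma mpow_antimono: "s \<le> s' \<Longrightarrow> mpow r s' \<subseteq> mpow r s"
  by (auto simp: mpow_def)

lemma mpow_subset_mA_pre:
  fixes f :: "(nat \<Rightarrow> nat) \<Rightarrow> 'k::field"
  shows "mpow r i \<subseteq> mA_pre r f i"
proof
  fix \<mu> :: "(nat \<Rightarrow> nat) \<Rightarrow> 'k" assume "\<mu> \<in> mpow r i"
  then have "\<mu> + 0 \<in> mA_pre r f i"
    unfolding mA_pre_def using vs.subspace_0[OF subspace_Ann[of r f]] by (rule ssumI)
  then show "\<mu> \<in> mA_pre r f i" by simp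
qed

lemma mA_pre_subset_PS:
  fixes f :: "(nat \<Rightarrow> nat) \<Rightarrow> 'k::field"
  shows "mA_pre r f i \<subseteq> PS r"
proof
  fix \<phi> :: "(nat \<Rightarrow> nat) \<Rightarrow> 'k" assume "\<phi> \<in> mA_pre r f i"
  then obtain \<mu> \<nu> where "\<phi> = \<mu> + \<nu>" "\<mu> \<in> PS r" "\<nu> \<in> PS r"
    by (auto simp: mA_pre_def mpow_def Ann_def elim: ssumE)
  then show "\<phi> \<in> PS r" by (simp add: vs.subspace_add[OF subspace_PS])
qed

lemma act_mA_pre: "act (mA_pre r f i) f = act (mpow r i) f"
proof
  show "act (mA_pre r f i) f \<subseteq> act (mpow r i) f"
  proof
    fix y assume "y \<in> act (mA_pre r f i) f"
    then obtain \<mu> \<nu> where "y = contr (\<mu> + \<nu>) f" "\<mu> \<in> mpow r i" "\<nu> \<in> Ann r f"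
      by (auto simp: act_def mA_pre_def elim: ssumE)
    then show "y \<in> act (mpow r i) f" by (simp add: act_def contr_add Ann_def)
  qed
  show "act (mpow r i) f \<subseteq> act (mA_pre r f i) f"
    unfolding act_def using mpow_subset_mA_pre by blast
qed

lemma ann_pow_iff_le_deg:
  assumes "f \<in> DP r" "\<phi> \<in> mA_pre r f i"
  shows "ann_pow r f \<phi> (t + 1) \<longleftrightarrow> contr \<phi> f \<in> le_deg r (act (mpow r i) f) t"
proof -
  have "\<phi> \<in> PS r" using assms(2) mA_pre_subset_PS by blast
  have "contr \<phi> f \<in> act (mpow r i) f" using assms(2) act_mA_pre[of r f i] by (auto simp: act_def)
  have "ann_pow r f \<phi> (t + 1) \<longleftrightarrow> (\<forall>\<beta>. contr \<phi> f \<beta> \<noteq> 0 \<longrightarrow> int (tdeg r \<beta>) < t + 1)"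
    using assms(1) \<open>\<phi> \<in> PS r\<close> by (rule ann_pow_iff_degree)
  also have "\<dots> \<longleftrightarrow> contr \<phi> f \<in> le_deg r (act (mpow r i) f) t"
    using \<open>contr \<phi> f \<in> act (mpow r i) f\<close> by (auto simp: le_deg_def)
  finally show ?thesis .
qed

lemma lift_mem_ssum_of_contr_mem_ssum:
  fixes f w :: "(nat \<Rightarrow> nat) \<Rightarrow> 'k::field"
  assumes f: "f \<in> DP r" and "w \<in> mA_pre r f i"
    and "contr w f \<in> ssum (le_deg r (act (mpow r i) f) (t - 1)) (le_deg r (act (mpow r (i + 1)) f) t)"
  shows "w \<in> ssum {\<phi> \<in> mA_pre r f i. ann_pow r f \<phi> t} (mA_pre r f (i + 1))"
proof -
  obtain y1 y2 where y: "contr w f = y1 + y2" "y1 \<in> le_deg r (act (mpow r i) f) (t - 1)"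
    "y2 \<in> le_deg r (act (mpow r (i + 1)) f) t"
    using assms(3) by (rule ssumE)
  obtain \<mu>1 where \<mu>1: "\<mu>1 \<in> mpow r i" "y1 = contr \<mu>1 f" using y(2) by (auto simp: le_deg_def act_def)
  obtain \<mu>2 where \<mu>2: "\<mu>2 \<in> mpow r (i + 1)" "y2 = contr \<mu>2 f" using y(3) by (auto simp: le_deg_def act_def)
  define \<nu> where "\<nu> = w - \<mu>1 - \<mu>2"
  have "w \<in> PS r" "\<mu>1 \<in> PS r" "\<mu>2 \<in> PS r"
    using \<open>w \<in> mA_pre r f i\<close> \<mu>1(1) \<mu>2(1) mA_pre_subset_PS by (auto simp: mpow_def)
  then have "\<nu> \<in> PS r" unfolding \<nu>_def by (intro vs.subspace_diff[OF subspace_PS])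
  moreover have "contr \<nu> f = 0"
    unfolding \<nu>_def using y(1) \<mu>1(2) \<mu>2(2) by (simp add: vsp.linear_diff[OF linear_contr])
  ultimately have "\<nu> \<in> Ann r f" by (simp add: Ann_def)
  have "\<mu>1 \<in> mA_pre r f i" using \<mu>1(1) mpow_subset_mA_pre by blast
  then have "\<mu>1 \<in> {\<phi> \<in> mA_pre r f i. ann_pow r f \<phi> t}"
    using ann_pow_iff_le_deg[OF f \<open>\<mu>1 \<in> mA_pre r f i\<close>, of "t - 1"] y(2) \<mu>1(2) by simp
  moreover have "\<mu>2 + \<nu> \<in> mA_pre r f (i + 1)"
    unfolding mA_pre_def using \<mu>2(1) \<open>\<nu> \<in> Ann r f\<close> by (rule ssumI)
  ultimately have "\<mu>1 + (\<mu>2 + \<nu>) \<in> ssum {\<phi> \<in> mA_pre r f i. ann_pow r f \<phi> t} (mA_pre r f (i + 1))"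
    by (rule ssumI)
  then show ?thesis by (simp add: \<nu>_def)
qed

lemma contr_mem_ssum_of_lift_mem_ssum:
  fixes f w :: "(nat \<Rightarrow> nat) \<Rightarrow> 'k::field"
  assumes f: "f \<in> DP r" and w: "w \<in> mA_pre r f i" "ann_pow r f w (t + 1)"
    and "w \<in> ssum {\<phi> \<in> mA_pre r f i. ann_pow r f \<phi> t} (mA_pre r f (i + 1))"
  shows "contr w f \<in> ssum (le_deg r (act (mpow r i) f) (t - 1)) (le_deg r (act (mpow r (i + 1)) f) t)"
proof -
  obtain w1 w2 where ws: "w = w1 + w2" "w1 \<in> {\<phi> \<in> mA_pre r f i. ann_pow r f \<phi> t}"
    "w2 \<in> mA_pre r f (i + 1)"
    using assms(4) by (rule ssumE)
  let ?D = "le_deg r (UNIV :: ((nat \<Rightarrow> nat) \<Rightarrow> 'k) set) t"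
  have w1_deg: "contr w1 f \<in> le_deg r (act (mpow r i) f) (t - 1)"
    using ann_pow_iff_le_deg[OF f, of w1 i "t - 1"] ws(2) by simp
  have "contr w f \<in> ?D" using ann_pow_iff_le_deg[OF f w(1)] w(2) by (auto simp: le_deg_def)
  moreover have "contr w1 f \<in> ?D" using w1_deg by (auto simp: le_deg_def)
  ultimately have "contr w f - contr w1 f \<in> ?D"
    by (rule vs.subspace_diff[OF subspace_le_deg[OF vs.subspace_UNIV]])
  moreover have "contr w f - contr w1 f = contr w2 f" using ws(1) by (simp add: contr_add)
  moreover have "contr w2 f \<in> act (mpow r (i + 1)) f"
    using ws(3) act_mA_pre[of r f "i + 1"] by (auto simp: act_def)
  ultimately have "contr w2 f \<in> le_deg r (act (mpow r (i + 1)) f) t" by (auto simp: le_deg_def)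
  with w1_deg have "contr w1 f + contr w2 f
      \<in> ssum (le_deg r (act (mpow r i) f) (t - 1)) (le_deg r (act (mpow r (i + 1)) f) t)"
    by (rule ssumI)
  then show ?thesis by (simp add: ws(1) contr_add)
qed

lemma le_deg_act_ssum_subset:
  "ssum (le_deg r (act (mpow r i) f) (t - 1)) (le_deg r (act (mpow r (i + 1)) f) t)
     \<subseteq> le_deg r (act (mpow r i) f) t"
proof
  fix y assume "y \<in> ssum (le_deg r (act (mpow r i) f) (t - 1)) (le_deg r (act (mpow r (i + 1)) f) t)"
  then obtain y1 y2 where "y = y1 + y2" "y1 \<in> le_deg r (act (mpow r i) f) (t - 1)"
    "y2 \<in> le_deg r (act (mpow r (i + 1)) f) t"
    by (rule ssumE)
  moreover have "act (mpow r (i + 1)) f \<subseteq> act (mpow r i) f"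
    unfolding act_def using mpow_antimono[of i "i + 1" r] by auto
  ultimately have "y1 \<in> le_deg r (act (mpow r i) f) t" "y2 \<in> le_deg r (act (mpow r i) f) t"
    by (auto simp: le_deg_def)
  then show "y \<in> le_deg r (act (mpow r i) f) t"
    using \<open>y = y1 + y2\<close> vs.subspace_add[OF subspace_le_deg[OF subspace_act]] by simp
qed

lemma le_deg_act_lift:
  assumes f: "f \<in> DP r" and y: "y \<in> le_deg r (act (mpow r i) f) t"
  obtains \<mu> where "\<mu> \<in> mA_pre r f i" "ann_pow r f \<mu> (t + 1)" "contr \<mu> f = y"
proof -
  obtain \<mu> where "\<mu> \<in> mpow r i" "y = contr \<mu> f" using y by (auto simp: le_deg_def act_def)
  then have "\<mu> \<in> mA_pre r f i" using mpow_subset_mA_pre by blast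
  moreover have "ann_pow r f \<mu> (t + 1)"
    using ann_pow_iff_le_deg[OF f \<open>\<mu> \<in> mA_pre r f i\<close>] y \<open>y = contr \<mu> f\<close> by simp
  ultimately show ?thesis using \<open>y = contr \<mu> f\<close> that by blast
qed

text \<open>The isomorphism is induced by \<phi> \<mapsto> \<phi> o f on the lifts in m^i + Ann f that are killed
  by m_A^(J+1-a-i).\<close>
lemma quot_iso_C_pre:
  fixes f :: "(nat \<Rightarrow> nat) \<Rightarrow> 'k::field" and J a i :: int
  assumes f: "f \<in> DP r"
  shows "quot_iso (C_pre r f J a i) (C_pre r f J (a + 1) i)
           (le_deg r (act (mpow r i) f) (J - a - i))
           (ssum (le_deg r (act (mpow r i) f) (J - a - 1 - i))
                 (le_deg r (act (mpow r (i + 1)) f) (J - a - i)))"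
proof -
  define t where "t = J - a - i"
  have t: "J + 1 - a - i = t + 1" "J + 1 - (a + 1) - i = t" "J - a - 1 - i = t - 1" "J - a - i = t"
    by (simp_all add: t_def)
  show ?thesis unfolding C_pre_def t
  proof (rule quot_iso_ssum_of_linear[OF subspace_ann_pow subspace_ann_pow subspace_mA_pre _ _
        le_deg_act_ssum_subset linear_contr])
    show "vs.subspace (ssum (le_deg r (act (mpow r i) f) (t - 1)) (le_deg r (act (mpow r (i + 1)) f) t))"
      by (intro subspace_ssum subspace_le_deg subspace_act)
    show "{\<phi> \<in> mA_pre r f i. ann_pow r f \<phi> t} \<subseteq> {\<phi> \<in> mA_pre r f i. ann_pow r f \<phi> (t + 1)}"
      unfolding ann_pow_def using mpow_antimono[of t "t + 1" r] by auto
    show "(\<lambda>\<phi>. contr \<phi> f) ` {\<phi> \<in> mA_pre r f i. ann_pow r f \<phi> (t + 1)} \<subseteq> le_deg r (act (mpow r i) f) t"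
      using ann_pow_iff_le_deg[OF f] by blast
    show "\<forall>y\<in>le_deg r (act (mpow r i) f) t. \<exists>w\<in>{\<phi> \<in> mA_pre r f i. ann_pow r f \<phi> (t + 1)}.
        y - contr w f \<in> ssum (le_deg r (act (mpow r i) f) (t - 1)) (le_deg r (act (mpow r (i + 1)) f) t)"
    proof
      fix y assume "y \<in> le_deg r (act (mpow r i) f) t"
      then obtain \<mu> where "\<mu> \<in> {\<phi> \<in> mA_pre r f i. ann_pow r f \<phi> (t + 1)}" "contr \<mu> f = y"
        using le_deg_act_lift[OF f] by blast
      then show "\<exists>w\<in>{\<phi> \<in> mA_pre r f i. ann_pow r f \<phi> (t + 1)}.
          y - contr w f \<in> ssum (le_deg r (act (mpow r i) f) (t - 1)) (le_deg r (act (mpow r (i + 1)) f) t)"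
        using vs.subspace_0[OF subspace_ssum[OF subspace_le_deg[OF subspace_act] subspace_le_deg[OF subspace_act]]]
        by force
    qed
    show "\<forall>w\<in>{\<phi> \<in> mA_pre r f i. ann_pow r f \<phi> (t + 1)}.
        contr w f \<in> ssum (le_deg r (act (mpow r i) f) (t - 1)) (le_deg r (act (mpow r (i + 1)) f) t)
        \<longleftrightarrow> w \<in> ssum {\<phi> \<in> mA_pre r f i. ann_pow r f \<phi> t} (mA_pre r f (i + 1))"
      using lift_mem_ssum_of_contr_mem_ssum[OF f] contr_mem_ssum_of_lift_mem_ssum[OF f] by blast
  qed
qed

lemma quot_iso_dual_C_pre:
  fixes f :: "(nat \<Rightarrow> nat) \<Rightarrow> 'k::field" and J a i :: int
  assumes f: "f \<in> DP r"
  shows "quot_iso (dual_quot (C_pre r f J a (J - a - i)) (C_pre r f J (a + 1) (J - a - i))) {0}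
           (le_deg r (act (mpow r (J - a - i)) f) i)
           (ssum (le_deg r (act (mpow r (J - a - i)) f) (i - 1))
                 (le_deg r (act (mpow r (J + 1 - a - i)) f) i))"
proof -
  define i' where "i' = J - a - i"
  have i': "J - a - i' = i" "J - a - 1 - i' = i - 1" "i' + 1 = J + 1 - a - i"
    by (simp_all add: i'_def)
  have "quot_iso (C_pre r f J a i') (C_pre r f J (a + 1) i') (le_deg r (act (mpow r i') f) i)
      (ssum (le_deg r (act (mpow r i') f) (i - 1)) (le_deg r (act (mpow r (J + 1 - a - i)) f) i))"
    using quot_iso_C_pre[OF f, of J a i'] unfolding i' .
  moreover have "\<forall>y\<in>le_deg r (act (mpow r i') f) i. \<forall>x. y x \<noteq> 0 \<longrightarrow> x \<in> supp_downset f"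
    by (auto simp: le_deg_def act_def intro: contr_support)
  ultimately show ?thesis unfolding i'_def[symmetric]
    by (rule quot_iso_dual[OF _ subspace_C_pre subspace_C_pre subspace_le_deg[OF subspace_act]
          subspace_ssum[OF subspace_le_deg[OF subspace_act] subspace_le_deg[OF subspace_act]]
          finite_supp_downset[OF f]])
qed

theorem lemma1p25:
  fixes f :: "(nat \<Rightarrow> nat) \<Rightarrow> 'k::field" and r j :: nat and a i :: int
  assumes "f \<in> DP r" and "f \<noteq> 0" and "dp_deg r f = j" and "0 \<le> a"
  shows "quot_iso (C_pre r f (int j) a i) (C_pre r f (int j) (a + 1) i)
           (le_deg r (act (mpow r i) f) (int j - a - i))
           (ssum (le_deg r (act (mpow r i) f) (int j - a - 1 - i))
                 (le_deg r (act (mpow r (i + 1)) f) (int j - a - i)))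
       \<and> quot_iso (dual_quot (C_pre r f (int j) a (int j - a - i)) (C_pre r f (int j) (a + 1) (int j - a - i)))
           {0}
           (le_deg r (act (mpow r (int j - a - i)) f) i)
           (ssum (le_deg r (act (mpow r (int j - a - i)) f) (i - 1))
                 (le_deg r (act (mpow r (int j + 1 - a - i)) f) i))"
proof -
  \<comment> \<open>Only f \<in> DP r is used: both isomorphisms hold for arbitrary integers j and a; that j is
    the socle degree of A only matters for reading C_A(a) as the paper's filtration.\<close>
  show ?thesis using quot_iso_C_pre[OF assms(1)] quot_iso_dual_C_pre[OF assms(1)] by blast
qed

end
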